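(* Let $X=\{a,\dots,b\}\subseteq\mathbb{N}$, let $f^p:\mathcal{P}^n\to X$ be a generalized median voter scheme with monotonic family of fixed ballots $p=\{p_S\}_{S\subseteq N}$, and let $i\in N$. (i) If $p_{N\setminus\{i\}}\le p_{\{i\}}$, then $x\in V_i$ if and only if $x<p_{N\setminus\{i\}}$ or $x>p_{\{i\}}$. (ii) If $p_{\{i\}}<p_{N\setminus\{i\}}$, then $V_i=X$.
   Context: $N=\{1,\dots,n\}$, $n\ge2$; $X=\{a,a+1,\dots,b\}$, $|X|\ge2$; $\mathcal{P}$ all strict linear orders on $X$; $t(P_i)$ the top of $P_i$. A monotonic family of fixed ballots: $p_S\in X$ for all $S\subseteq N$, $p_N=a$, $p_\emptyset=b$, and $T\subseteq Q$ implies $p_Q\le p_T$. $f^p(P)=\min_{S\subseteq N}\max_{j\in S}\{t(P_j),p_S\}$. Option set $O(P_i)=\{f^p(P_i,P_{-i}):P_{-i}\in\mathcal{P}^{n-1}\}$. Agent $i$ vetoes $x$ via $P_i$ if $x\notin O(P_i)$; $V_i$ is the set of alternatives $i$ vetoes via some preference. *)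

theory Defs
  imports Main
begin

text \<open>Agents N = {1..n}; alternatives X = {a..b} (natural numbers).
  A preference is a strict linear order on X, represented as a relation R
  with (x,y) \<in> R meaning x is strictly preferred to y.\<close>

definition is_pref :: "nat set \<Rightarrow> (nat \<times> nat) set \<Rightarrow> bool" where
  "is_pref X R \<longleftrightarrow> R \<subseteq> X \<times> X \<and> strict_linear_order_on X R"

definition prefs :: "nat set \<Rightarrow> (nat \<times> nat) set set" where
  "prefs X = {R. is_pref X R}"

definition top_pref :: "nat set \<Rightarrow> (nat \<times> nat) set \<Rightarrow> nat" where
  "top_pref X R = (THE x. x \<in> X \<and> (\<forall>y\<in>X. y \<noteq> x \<longrightarrow> (x, y) \<in> R))"

definition monotonic_fixed_ballots :: "nat \<Rightarrow> nat \<Rightarrow> nat \<Rightarrow> (nat set \<Rightarrow> nat) \<Rightarrow> bool" where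
  "monotonic_fixed_ballots n a b p \<longleftrightarrow>
     (\<forall>S. S \<subseteq> {1..n} \<longrightarrow> p S \<in> {a..b}) \<and>
     p {1..n} = a \<and> p {} = b \<and>
     (\<forall>T Q. T \<subseteq> Q \<and> Q \<subseteq> {1..n} \<longrightarrow> p Q \<le> p T)"

definition gmvs :: "nat \<Rightarrow> nat \<Rightarrow> nat \<Rightarrow> (nat set \<Rightarrow> nat) \<Rightarrow> (nat \<Rightarrow> (nat \<times> nat) set) \<Rightarrow> nat" where
  "gmvs n a b p P = Min ((\<lambda>S. Max ({p S} \<union> (\<lambda>j. top_pref {a..b} (P j)) ` S)) ` Pow {1..n})"

definition option_set :: "nat \<Rightarrow> nat \<Rightarrow> nat \<Rightarrow> (nat set \<Rightarrow> nat) \<Rightarrow> nat \<Rightarrow> (nat \<times> nat) set \<Rightarrow> nat set" where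
  "option_set n a b p i Pi =
     {gmvs n a b p (P(i := Pi)) | P. \<forall>j\<in>{1..n} - {i}. P j \<in> prefs {a..b}}"

definition veto_set :: "nat \<Rightarrow> nat \<Rightarrow> nat \<Rightarrow> (nat set \<Rightarrow> nat) \<Rightarrow> nat \<Rightarrow> nat set" where
  "veto_set n a b p i =
     {x \<in> {a..b}. \<exists>Pi \<in> prefs {a..b}. x \<notin> option_set n a b p i Pi}"

end

theory Submission
  imports Defs
begin

text \<open>With top alternative t, agent i's option set is the interval
  [min t p(N-{i}), max t p({i})]: the coalition {i} caps the outcome at max t p({i});
  every coalition either contains i or has a ballot of at least p(N-{i}), which bounds the
  outcome from below; and every point of the interval is the outcome when all other agents
  report it as their top. An alternative x therefore lies outside some option set iff it lies
  outside the one for t = b or the one for t = a, i.e. iff x < p(N-{i}) or p({i}) < x.\<close>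

lemma top_pref_eqI:
  assumes "R \<in> prefs X" "t \<in> X" "\<forall>y\<in>X. y \<noteq> t \<longrightarrow> (t, y) \<in> R"
  shows "top_pref X R = t"
  unfolding top_pref_def
proof (rule the_equality)
  show "t \<in> X \<and> (\<forall>y\<in>X. y \<noteq> t \<longrightarrow> (t, y) \<in> R)" using assms(2,3) by blast
next
  have "trans R" "irrefl R"
    using assms(1) unfolding prefs_def is_pref_def strict_linear_order_on_def by auto
  fix w assume w: "w \<in> X \<and> (\<forall>y\<in>X. y \<noteq> w \<longrightarrow> (w, y) \<in> R)"
  show "w = t"
  proof (rule ccontr)
    assume "w \<noteq> t"
    then have "(w, t) \<in> R" "(t, w) \<in> R" using w assms(2,3) by auto
    then show False using \<open>trans R\<close> \<open>irrefl R\<close> by (meson irrefl_def transD)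
  qed
qed

lemma top_pref_in:
  assumes "R \<in> prefs X" "finite X" "X \<noteq> {}"
  shows "top_pref X R \<in> X"
proof -
  have R: "R \<subseteq> X \<times> X" "trans R" "irrefl R" "total_on X R"
    using assms(1) unfolding prefs_def is_pref_def strict_linear_order_on_def by auto
  then have "wf R"
    using assms(2) finite_subset[OF R(1)] by (simp add: finite_acyclic_wf acyclic_irrefl)
  then obtain z where z: "z \<in> X" "\<forall>y. (y, z) \<in> R \<longrightarrow> y \<notin> X"
    using assms(3) wf_eq_minimal by (metis ex_in_conv)
  have "\<forall>y\<in>X. y \<noteq> z \<longrightarrow> (z, y) \<in> R"
    using z R(4) unfolding total_on_def by blast
  then show ?thesis using top_pref_eqI[OF assms(1) z(1)] z(1) by simp
qed

lemma ex_pref_with_top: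
  assumes "t \<in> X"
  shows "\<exists>R\<in>prefs X. top_pref X R = t"
proof -
  define key :: "nat \<Rightarrow> nat" where "key x = (if x = t then 0 else Suc x)" for x
  define R where "R = {(x, y). x \<in> X \<and> y \<in> X \<and> key x < key y}"
  have "total_on X R" unfolding R_def key_def total_on_def by auto
  moreover have "trans R" "irrefl R" "R \<subseteq> X \<times> X"
    unfolding R_def trans_def irrefl_def by auto
  ultimately have "R \<in> prefs X"
    unfolding prefs_def is_pref_def strict_linear_order_on_def by simp
  moreover have "\<forall>y\<in>X. y \<noteq> t \<longrightarrow> (t, y) \<in> R"
    using assms by (simp add: R_def key_def)
  then have "top_pref X R = t"
    by (rule top_pref_eqI[OF \<open>R \<in> prefs X\<close> assms])
  ultimately show ?thesis by blast
qed

lemma gmvs_le_iff: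
  "gmvs n a b p P \<le> x \<longleftrightarrow>
     (\<exists>S\<subseteq>{1..n}. p S \<le> x \<and> (\<forall>j\<in>S. top_pref {a..b} (P j) \<le> x))"
  unfolding gmvs_def
  by (subst Min_le_iff) (auto simp: finite_subset)

lemma le_gmvs_iff:
  "x \<le> gmvs n a b p P \<longleftrightarrow>
     (\<forall>S\<subseteq>{1..n}. x \<le> p S \<or> (\<exists>j\<in>S. x \<le> top_pref {a..b} (P j)))"
  unfolding gmvs_def
  by (subst Min_ge_iff) (auto simp: finite_subset Max_ge_iff)

lemma option_set_bounds:
  assumes mfb: "monotonic_fixed_ballots n a b p" and i: "i \<in> {1..n}"
    and x: "x \<in> option_set n a b p i Pi"
  defines "t \<equiv> top_pref {a..b} Pi"
  shows "min t (p ({1..n} - {i})) \<le> x \<and> x \<le> max t (p {i})"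
proof
  let ?N = "{1..n}" and ?q = "p ({1..n} - {i})"
  obtain P where x: "x = gmvs n a b p (P(i := Pi))"
    using x unfolding option_set_def by blast
  show "x \<le> max t (p {i})"
    unfolding x gmvs_le_iff using i by (intro exI[of _ "{i}"]) (auto simp: t_def)
  show "min t ?q \<le> x"
    unfolding x le_gmvs_iff
  proof (intro allI impI)
    fix S assume S: "S \<subseteq> ?N"
    show "min t ?q \<le> p S \<or> (\<exists>j\<in>S. min t ?q \<le> top_pref {a..b} ((P(i := Pi)) j))"
    proof (cases "i \<in> S")
      case False
      then have "S \<subseteq> ?N - {i}" using S by blast
      then have "?q \<le> p S"
        using mfb unfolding monotonic_fixed_ballots_def by simp
      then show ?thesis by (intro disjI1 min.coboundedI2)
    qed (auto simp: t_def)
  qed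
qed

lemma option_set_reaches:
  assumes mfb: "monotonic_fixed_ballots n a b p" and i: "i \<in> {1..n}"
    and "a \<le> b" and Pi: "Pi \<in> prefs {a..b}"
  defines "t \<equiv> top_pref {a..b} Pi"
  assumes x: "min t (p ({1..n} - {i})) \<le> x" "x \<le> max t (p {i})"
  shows "x \<in> option_set n a b p i Pi"
proof -
  let ?N = "{1..n}"
  have pX: "\<And>S. S \<subseteq> ?N \<Longrightarrow> p S \<in> {a..b}" and pN: "p ?N = a" and pE: "p {} = b"
    using mfb unfolding monotonic_fixed_ballots_def by auto
  have "t \<in> {a..b}" using top_pref_in[OF Pi] \<open>a \<le> b\<close> by (simp add: t_def)
  with x pX[of "?N - {i}"] pX[of "{i}"] i have xX: "x \<in> {a..b}" by auto
  then obtain Rx where Rx: "Rx \<in> prefs {a..b}" "top_pref {a..b} Rx = x"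
    using ex_pref_with_top by blast
  let ?P = "(\<lambda>_. Rx)(i := Pi)"
  have "gmvs n a b p ?P \<le> x"
    unfolding gmvs_le_iff
  proof (cases "t \<le> x")
    case True
    then show "\<exists>S\<subseteq>?N. p S \<le> x \<and> (\<forall>j\<in>S. top_pref {a..b} (?P j) \<le> x)"
      using pN xX Rx(2) by (intro exI[of _ ?N]) (auto simp: t_def)
  next
    case False
    then show "\<exists>S\<subseteq>?N. p S \<le> x \<and> (\<forall>j\<in>S. top_pref {a..b} (?P j) \<le> x)"
      using x Rx(2) by (intro exI[of _ "?N - {i}"]) (auto simp: t_def)
  qed
  moreover have "x \<le> gmvs n a b p ?P"
    unfolding le_gmvs_iff
  proof (intro allI impI)
    fix S assume "S \<subseteq> ?N"
    show "x \<le> p S \<or> (\<exists>j\<in>S. x \<le> top_pref {a..b} (?P j))"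
    proof (cases "S \<subseteq> {i}")
      case True
      then have "S = {} \<or> S = {i}" by blast
      then show ?thesis using x xX pE by (auto simp: t_def)
    qed (auto simp: Rx(2))
  qed
  ultimately have "x = gmvs n a b p ?P" by simp
  moreover have "\<forall>j\<in>?N - {i}. ((\<lambda>_. Rx) j) \<in> prefs {a..b}" using Rx(1) by simp
  ultimately show ?thesis unfolding option_set_def by blast
qed

lemma option_set_eq:
  assumes "monotonic_fixed_ballots n a b p" "i \<in> {1..n}" "a \<le> b" "Pi \<in> prefs {a..b}"
  shows "option_set n a b p i Pi =
    {min (top_pref {a..b} Pi) (p ({1..n} - {i})) .. max (top_pref {a..b} Pi) (p {i})}"
  using option_set_bounds[OF assms(1,2)] option_set_reaches[OF assms] by auto

lemma veto_set_eq:
  assumes mfb: "monotonic_fixed_ballots n a b p" and i: "i \<in> {1..n}" and "a \<le> b"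
  shows "veto_set n a b p i = {x \<in> {a..b}. x < p ({1..n} - {i}) \<or> p {i} < x}"
  unfolding veto_set_def
proof (rule Collect_cong, rule conj_cong[OF refl])
  let ?q = "p ({1..n} - {i})" and ?r = "p {i}"
  note option = option_set_eq[OF mfb i \<open>a \<le> b\<close>]
  fix x
  show "(\<exists>Pi\<in>prefs {a..b}. x \<notin> option_set n a b p i Pi) \<longleftrightarrow> x < ?q \<or> ?r < x"
  proof
    assume "\<exists>Pi\<in>prefs {a..b}. x \<notin> option_set n a b p i Pi"
    then show "x < ?q \<or> ?r < x" using option by force
  next
    have "?q \<le> b" "a \<le> ?r"
      using mfb i unfolding monotonic_fixed_ballots_def by auto
    obtain Ra Rb where Ra: "Ra \<in> prefs {a..b}" "top_pref {a..b} Ra = a"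
      and Rb: "Rb \<in> prefs {a..b}" "top_pref {a..b} Rb = b"
      using ex_pref_with_top \<open>a \<le> b\<close> by (meson atLeastAtMost_iff order_refl)
    assume "x < ?q \<or> ?r < x"
    then show "\<exists>Pi\<in>prefs {a..b}. x \<notin> option_set n a b p i Pi"
    proof
      assume "x < ?q"
      then have "x \<notin> option_set n a b p i Rb" using option[OF Rb(1)] Rb(2) \<open>?q \<le> b\<close> by simp
      then show ?thesis using Rb(1) by blast
    next
      assume "?r < x"
      then have "x \<notin> option_set n a b p i Ra" using option[OF Ra(1)] Ra(2) \<open>a \<le> ?r\<close> by simp
      then show ?thesis using Ra(1) by blast
    qed
  qed
qed

theorem lemma2:
  fixes n a b :: nat and p :: "nat set \<Rightarrow> nat" and i :: nat
  assumes "n \<ge> 2" and "a < b"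
    and "monotonic_fixed_ballots n a b p"
    and "i \<in> {1..n}"
  shows "(p ({1..n} - {i}) \<le> p {i} \<longrightarrow>
           (\<forall>x\<in>{a..b}. x \<in> veto_set n a b p i \<longleftrightarrow> x < p ({1..n} - {i}) \<or> x > p {i}))
       \<and> (p {i} < p ({1..n} - {i}) \<longrightarrow> veto_set n a b p i = {a..b})"
proof -
  have veto: "veto_set n a b p i = {x \<in> {a..b}. x < p ({1..n} - {i}) \<or> p {i} < x}"
    using veto_set_eq[OF assms(3,4)] \<open>a < b\<close> by simp
  show ?thesis
  proof (intro conjI impI)
    show "\<forall>x\<in>{a..b}. x \<in> veto_set n a b p i \<longleftrightarrow> x < p ({1..n} - {i}) \<or> x > p {i}"
      unfolding veto by simp
    assume "p {i} < p ({1..n} - {i})"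
    then show "veto_set n a b p i = {a..b}"
      unfolding veto by (auto simp: not_less)
  qed
qed

end
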